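(* Let $\delta>0$, $\alpha\in(0,2)$, $\alpha_0\in(0,1)$, and suppose $$\limsup_{|x|\to\infty}\bigg[\Big(\sup_{|z|\ge|x|}e^{-V(z)}\Big)e^{\delta|x|}|x|^{d+\alpha-\alpha_0}\bigg]=0.$$ Then there is $C_0>0$ such that for all $f\in C_b^\infty(\mathbb R^d)$, $$\int\big(f(x)-\mu_{2V}(f)\big)^2\frac{e^{V(x)-\delta|x|}}{(1+|x|)^{d+\alpha}}\mu_{2V}(dx)\le C_0\iint\frac{(f(y)-f(x))^2}{|y-x|^{d+\alpha}}e^{-\delta|y-x|}e^{-V(y)}dy\,e^{-V(x)}dx.$$
   Context: Let $d\ge1$. $V:\mathbb R^d\to\mathbb R$ is a locally bounded measurable function such that $e^{-V}$ is bounded and $\int e^{-V(x)}dx<\infty$. $\mu_{2V}(dx):=\frac{e^{-2V(x)}}{\int e^{-2V(y)}dy}dx$, $\mu_{2V}(f)=\int f\,d\mu_{2V}$. $C_b^\infty$ denotes smooth functions bounded with all derivatives. *)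

theory Defs
  imports "HOL-Analysis.Analysis"
begin

text \<open>C_b^infinity: smooth functions bounded together with all their derivatives.\<close>
coinductive Cb_inf :: "('a::euclidean_space \<Rightarrow> real) \<Rightarrow> bool" where
  "\<lbrakk> bounded (range f);
     \<forall>x. f differentiable (at x);
     \<forall>i\<in>Basis. Cb_inf (\<lambda>x. frechet_derivative f (at x) i) \<rbrakk> \<Longrightarrow> Cb_inf f"

definition locally_bounded :: "('a::euclidean_space \<Rightarrow> real) \<Rightarrow> bool" where
  "locally_bounded V \<longleftrightarrow> (\<forall>K. compact K \<longrightarrow> bounded (V ` K))"

definition rho2V :: "('a::euclidean_space \<Rightarrow> real) \<Rightarrow> 'a \<Rightarrow> real" where
  "rho2V V x = exp (- 2 * V x) / (\<integral>y. exp (- 2 * V y) \<partial>lborel)"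

definition mu2V :: "('a::euclidean_space \<Rightarrow> real) \<Rightarrow> ('a \<Rightarrow> real) \<Rightarrow> real" where
  "mu2V V f = (\<integral>x. f x * rho2V V x \<partial>lborel)"

end

theory Submission
  imports Defs
begin

text \<open>
  Write e = exp(-V), Z = \<integral>e^2 and rho = e^2/Z for the density of mu_{2V}.
  For fixed x, f x - mu_{2V}(f) = \<integral>(f x - f y) rho(y) dy; inserting the jump kernel
  |y-x|^{-p} e^{-\<delta>|y-x|} e(y) (p = d + \<alpha>) and its reciprocal as weights gives
    (f x - mu_{2V}(f))^2 \<le> (energy density at x) * \<integral>e(y)^3 |y-x|^p e^{\<delta>|y-x|} dy / Z^2.
  Since |y-x|^p e^{\<delta>|y-x|} \<le> (1+|x|)^p e^{\<delta>|x|} (1+|y|)^p e^{\<delta>|y|}, the weight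
  e^{V(x)-\<delta>|x|}(1+|x|)^{-p} rho(x) of the left-hand side cancels every x-dependence, and
  what remains is \<integral>e(y) * [e(y)^2 (1+|y|)^p e^{\<delta>|y|}] dy, which is finite because the
  tail hypothesis makes the bracket bounded.
\<close>

text \<open>Weighted Cauchy--Schwarz inequality: splitting |g| = sqrt(g^2/w) * sqrt w gives
  (\<integral>g)^2 \<le> (\<integral>g^2/w) (\<integral>w) for any nonnegative weight w vanishing only where g does.\<close>

lemma weighted_cauchy_schwarz:
  fixes g w :: "'a \<Rightarrow> real"
  assumes [measurable]: "g \<in> borel_measurable M" "w \<in> borel_measurable M"
    and w_nonneg: "\<And>y. 0 \<le> w y"
    and g_supp: "\<And>y. w y = 0 \<Longrightarrow> g y = 0"
  shows "ennreal ((integral\<^sup>L M g)\<^sup>2)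
    \<le> (\<integral>\<^sup>+ y. ennreal ((g y)\<^sup>2 / w y) \<partial>M) * (\<integral>\<^sup>+ y. ennreal (w y) \<partial>M)"
proof (cases "integrable M g")
  case False
  then show ?thesis by (simp add: not_integrable_integral_eq)
next
  case True
  have split: "ennreal (norm (g y)) = ennreal (sqrt ((g y)\<^sup>2 / w y)) * ennreal (sqrt (w y))" for y
    using w_nonneg[of y] g_supp[of y]
    by (cases "w y = 0") (auto simp flip: ennreal_mult real_sqrt_mult)
  have "ennreal (norm (integral\<^sup>L M g)) \<le> (\<integral>\<^sup>+ y. ennreal (sqrt ((g y)\<^sup>2 / w y)) * ennreal (sqrt (w y)) \<partial>M)"
    using integral_norm_bound_ennreal[OF True] by (simp only: split)
  then have "ennreal (norm (integral\<^sup>L M g)) ^ 2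
      \<le> (\<integral>\<^sup>+ y. ennreal (sqrt ((g y)\<^sup>2 / w y)) * ennreal (sqrt (w y)) \<partial>M)\<^sup>2"
    by (rule power_mono) simp
  then have "ennreal ((integral\<^sup>L M g)\<^sup>2)
      \<le> (\<integral>\<^sup>+ y. ennreal (sqrt ((g y)\<^sup>2 / w y)) * ennreal (sqrt (w y)) \<partial>M)\<^sup>2"
    by (simp add: ennreal_power)
  also have "\<dots> \<le> (\<integral>\<^sup>+ y. ennreal (sqrt ((g y)\<^sup>2 / w y)) ^ 2 \<partial>M) * (\<integral>\<^sup>+ y. ennreal (sqrt (w y)) ^ 2 \<partial>M)"
    by (rule Cauchy_Schwarz_nn_integral) auto
  also have "\<dots> = (\<integral>\<^sup>+ y. ennreal ((g y)\<^sup>2 / w y) \<partial>M) * (\<integral>\<^sup>+ y. ennreal (w y) \<partial>M)"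
    using w_nonneg by (simp add: ennreal_power)
  finally show ?thesis .
qed

text \<open>Submultiplicativity of |z|^p e^{\<delta>|z|} across a difference z = y - x; it splits the
  reciprocal jump kernel into a factor in x, cancelled by the left-hand weight, and a
  factor in y, controlled by the tail hypothesis.\<close>

lemma norm_powr_exp_submult:
  fixes x y :: "'a::real_normed_vector" and p \<delta> :: real
  assumes p: "0 \<le> p" and \<delta>: "0 \<le> \<delta>"
  shows "norm (y - x) powr p * exp (\<delta> * norm (y - x))
    \<le> ((1 + norm x) powr p * exp (\<delta> * norm x)) * ((1 + norm y) powr p * exp (\<delta> * norm y))"
proof -
  have tri: "norm (y - x) \<le> norm x + norm y"
    using norm_triangle_ineq4[of y x] by simp
  have "norm (y - x) \<le> (1 + norm x) * (1 + norm y)"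
    using tri by (simp add: algebra_simps) (smt (verit) mult_nonneg_nonneg norm_ge_zero)
  then have "norm (y - x) powr p \<le> (1 + norm x) powr p * (1 + norm y) powr p"
    using p by (simp add: powr_mono2 flip: powr_mult)
  moreover have "exp (\<delta> * norm (y - x)) \<le> exp (\<delta> * norm x) * exp (\<delta> * norm y)"
    using tri \<delta> by (simp add: mult_left_mono flip: exp_add distrib_left)
  ultimately have "norm (y - x) powr p * exp (\<delta> * norm (y - x))
      \<le> ((1 + norm x) powr p * (1 + norm y) powr p) * (exp (\<delta> * norm x) * exp (\<delta> * norm y))"
    by (rule mult_mono) auto
  then show ?thesis
    by (simp add: mult_ac)
qed

lemma decay_from_tail_limsup:
  fixes e :: "'a::real_normed_vector \<Rightarrow> real" and \<delta> q :: real
  assumes bdd: "bdd_above (range e)"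
    and tail: "Limsup at_infinity (\<lambda>x::'a. ereal ((SUP z\<in>{z. norm z \<ge> norm x}. e z)
                  * exp (\<delta> * norm x) * norm x powr q)) = 0"
  shows "\<exists>R. \<forall>y. R \<le> norm y \<longrightarrow> e y * exp (\<delta> * norm y) * norm y powr q \<le> 1"
proof -
  have "eventually (\<lambda>x::'a. ereal ((SUP z\<in>{z. norm z \<ge> norm x}. e z)
                  * exp (\<delta> * norm x) * norm x powr q) < 1) at_infinity"
    by (rule Limsup_lessD) (simp add: tail)
  then obtain R where R: "\<And>y::'a. R \<le> norm y \<Longrightarrow>
      (SUP z\<in>{z. norm z \<ge> norm y}. e z) * exp (\<delta> * norm y) * norm y powr q < 1"
    unfolding eventually_at_infinity by auto
  have "e y \<le> (SUP z\<in>{z. norm z \<ge> norm y}. e z)" for y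
    using bdd by (intro cSUP_upper) (auto intro: bdd_above_mono)
  then have "e y * exp (\<delta> * norm y) * norm y powr q
      \<le> (SUP z\<in>{z. norm z \<ge> norm y}. e z) * exp (\<delta> * norm y) * norm y powr q" for y
    by (intro mult_right_mono) auto
  with R show ?thesis by (meson less_imp_le order_trans)
qed

text \<open>From the pointwise decay of e with exponent q, the function e(y)^2 (1+|y|)^p e^{\<delta>|y|}
  is bounded, provided p \<le> 2q + 1: far out it is at most 2^p |y|^(p-2q) e^{-\<delta>|y|},
  near the origin it is controlled by sup e.\<close>

lemma squared_weight_bounded:
  fixes e :: "'a::real_normed_vector \<Rightarrow> real" and \<delta> p q M R :: real
  assumes e_nonneg: "\<And>y. 0 \<le> e y" and e_le: "\<And>y. e y \<le> M"
    and \<delta>: "0 < \<delta>" and p: "0 \<le> p" "p \<le> 2 * q + 1"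
    and decay: "\<And>y. R \<le> norm y \<Longrightarrow> e y * exp (\<delta> * norm y) * norm y powr q \<le> 1"
  shows "\<exists>B. \<forall>y. (e y)\<^sup>2 * (1 + norm y) powr p * exp (\<delta> * norm y) \<le> B"
proof -
  define R1 where "R1 = max R 1"
  have far: "(e y)\<^sup>2 * (1 + norm y) powr p * exp (\<delta> * norm y) \<le> 2 powr p / \<delta>"
    if y: "R1 \<le> norm y" for y
  proof -
    define r t where "r = norm y" and "t = exp (\<delta> * norm y)"
    have r: "1 \<le> r" and t: "0 < t" using y by (auto simp: R1_def r_def t_def)
    have "e y * (t * r powr q) \<le> 1"
      using decay[of y] y by (simp add: R1_def r_def t_def mult_ac)
    then have "(e y * (t * r powr q))\<^sup>2 \<le> 1"
      using e_nonneg[of y] t r by (simp add: power_le_one)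
    then have e2: "(e y)\<^sup>2 \<le> 1 / (t * r powr q)\<^sup>2"
      using t r by (simp add: field_simps power_mult_distrib)
    have "(1 + r) powr p \<le> 2 powr p * r powr p"
      using r p by (simp add: powr_mono2 flip: powr_mult)
    then have "(e y)\<^sup>2 * (1 + r) powr p * t \<le> 1 / (t * r powr q)\<^sup>2 * (2 powr p * r powr p) * t"
      using e2 t by (intro mult_right_mono mult_mono) auto
    also have "\<dots> = 2 powr p * r powr (p - 2 * q) / t"
      using r t by (simp add: powr_diff power2_eq_square powr_mult_base field_simps flip: powr_add)
    also have "\<dots> \<le> 2 powr p * r / t"
      using r t p powr_mono[of "p - 2 * q" 1 r] by (intro divide_right_mono mult_left_mono) auto
    also have "\<dots> \<le> 2 powr p / \<delta>"
    proof -
      have "\<delta> * r \<le> t"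
        using exp_ge_add_one_self[of "\<delta> * r"] unfolding t_def r_def by linarith
      then show ?thesis
        using \<delta> t by (simp add: field_simps)
    qed
    finally show ?thesis by (simp add: r_def t_def)
  qed
  have near: "(e y)\<^sup>2 * (1 + norm y) powr p * exp (\<delta> * norm y)
      \<le> M\<^sup>2 * (1 + R1) powr p * exp (\<delta> * R1)" if y: "norm y \<le> R1" for y
    using y e_nonneg[of y] e_le[of y] \<delta> p
    by (intro mult_mono power_mono powr_mono2) auto
  show ?thesis
    using far near by (meson linear max.coboundedI1 max.coboundedI2)
qed

lemma integral_pos_lborel:
  fixes f :: "'a::euclidean_space \<Rightarrow> real"
  assumes int: "integrable lborel f" and pos: "\<And>x. 0 < f x"
  shows "0 < integral\<^sup>L lborel f"
proof -
  have "integral\<^sup>L lborel f \<noteq> 0"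
  proof
    assume "integral\<^sup>L lborel f = 0"
    then have "AE x in lborel. f x = 0"
      using int pos by (simp add: integral_nonneg_eq_0_iff_AE less_imp_le)
    then have "AE x in (lborel :: 'a measure). False"
      by (rule eventually_mono) (metis pos less_irrefl)
    then show False
      by (simp add: ae_filter_eq_bot_iff trivial_limit_def[symmetric])
  qed
  moreover have "0 \<le> integral\<^sup>L lborel f"
    using pos by (intro integral_nonneg_AE) (simp add: less_imp_le)
  ultimately show ?thesis by simp
qed

text \<open>rho2V V is a probability density: its normalising constant is positive because
  exp(-2V) \<le> M exp(-V) is integrable and positive.\<close>

lemma rho2V_density:
  fixes V :: "'a::euclidean_space \<Rightarrow> real"
  assumes [measurable]: "V \<in> borel_measurable borel"
    and M: "\<And>x. exp (- V x) \<le> M" and int: "integrable lborel (\<lambda>x. exp (- V x))"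
  shows "0 < (\<integral>y. exp (- 2 * V y) \<partial>lborel)"
    and "integrable lborel (rho2V V)"
    and "(\<integral>y. rho2V V y \<partial>lborel) = 1"
proof -
  have "integrable lborel (\<lambda>x. exp (- 2 * V x))"
  proof (rule Bochner_Integration.integrable_bound[OF integrable_mult_right[OF int, of M]])
    show "AE x in lborel. norm (exp (- 2 * V x)) \<le> norm (M * exp (- V x))"
    proof (rule AE_I2)
      fix x
      have "exp (- 2 * V x) = exp (- V x) * exp (- V x)"
        by (simp flip: exp_add)
      also have "\<dots> \<le> M * exp (- V x)"
        using M[of x] by (intro mult_right_mono) auto
      finally show "norm (exp (- 2 * V x)) \<le> norm (M * exp (- V x))"
        by simp
    qed
  qed simp
  moreover show "0 < (\<integral>y. exp (- 2 * V y) \<partial>lborel)"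
    using calculation by (rule integral_pos_lborel) simp
  ultimately show "integrable lborel (rho2V V)" "(\<integral>y. rho2V V y \<partial>lborel) = 1"
    unfolding rho2V_def[abs_def] by auto
qed

lemma mu2V_deviation:
  fixes V f :: "'a::euclidean_space \<Rightarrow> real"
  assumes [measurable]: "V \<in> borel_measurable borel" "f \<in> borel_measurable borel"
    and M: "\<And>x. exp (- V x) \<le> M" and int: "integrable lborel (\<lambda>x. exp (- V x))"
    and F: "\<And>x. \<bar>f x\<bar> \<le> F"
  shows "f x - mu2V V f = (\<integral>y. (f x - f y) * rho2V V y \<partial>lborel)"
proof -
  have \<rho>_int: "integrable lborel (rho2V V)" and \<rho>_1: "(\<integral>y. rho2V V y \<partial>lborel) = 1"
    using rho2V_density[OF _ M int] by auto
  have \<rho>_nonneg: "0 \<le> rho2V V y" for y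
    using rho2V_density(1)[OF _ M int] by (simp add: rho2V_def)
  have "integrable lborel (\<lambda>y. f y * rho2V V y)"
  proof (rule Bochner_Integration.integrable_bound[OF integrable_mult_right[OF \<rho>_int, of F]])
    show "AE y in lborel. norm (f y * rho2V V y) \<le> norm (F * rho2V V y)"
    proof (rule AE_I2)
      fix y
      have "\<bar>f y\<bar> \<le> \<bar>F\<bar>"
        using F[of y] by linarith
      then show "norm (f y * rho2V V y) \<le> norm (F * rho2V V y)"
        using \<rho>_nonneg[of y] by (simp add: abs_mult mult_right_mono)
    qed
  qed (simp add: rho2V_def)
  then have "(\<integral>y. (f x - f y) * rho2V V y \<partial>lborel)
      = f x * (\<integral>y. rho2V V y \<partial>lborel) - (\<integral>y. f y * rho2V V y \<partial>lborel)"
    using \<rho>_int by (simp add: left_diff_distrib)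
  then show ?thesis
    by (simp add: \<rho>_1 mu2V_def)
qed

text \<open>Pointwise key estimate: weighted Cauchy--Schwarz applied to y \<mapsto> (f x - f y) rho(y)
  with weight e(y)^3 |y-x|^p e^{\<delta>|y-x|} / Z^2 turns (f x - mu2V V f)^2 into the
  energy density at x times the integral of this weight.\<close>

lemma deviation_le_energy_times_weight:
  fixes V f :: "'a::euclidean_space \<Rightarrow> real" and \<delta> p :: real
  assumes [measurable]: "V \<in> borel_measurable borel" "f \<in> borel_measurable borel"
    and M: "\<And>x. exp (- V x) \<le> M" and int: "integrable lborel (\<lambda>x. exp (- V x))"
    and F: "\<And>x. \<bar>f x\<bar> \<le> F"
  defines "Z \<equiv> (\<integral>y. exp (- 2 * V y) \<partial>lborel)"
  shows "ennreal ((f x - mu2V V f)\<^sup>2)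
    \<le> (\<integral>\<^sup>+ y. ennreal ((f y - f x)\<^sup>2 / norm (y - x) powr p
              * exp (- \<delta> * norm (y - x)) * exp (- V y)) \<partial>lborel)
      * (\<integral>\<^sup>+ y. ennreal (exp (- V y) ^ 3 * norm (y - x) powr p * exp (\<delta> * norm (y - x)) / Z\<^sup>2) \<partial>lborel)"
proof -
  have Z: "0 < Z"
    unfolding Z_def using rho2V_density[OF _ M int] by simp
  define g where "g y = (f x - f y) * rho2V V y" for y
  define w where "w y = exp (- V y) ^ 3 * norm (y - x) powr p * exp (\<delta> * norm (y - x)) / Z\<^sup>2" for y
  have [measurable]: "g \<in> borel_measurable borel"
    unfolding g_def[abs_def] rho2V_def by measurable
  have [measurable]: "w \<in> borel_measurable borel"
    unfolding w_def[abs_def] by measurable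
  have quotient: "(g y)\<^sup>2 / w y = (f y - f x)\<^sup>2 / norm (y - x) powr p
      * exp (- \<delta> * norm (y - x)) * exp (- V y)" for y
  proof (cases "y = x")
    case False
    have "exp (- 2 * V y) = exp (- V y) ^ 2"
      using exp_of_nat_mult[of 2 "- V y"] by simp
    moreover have "exp (- \<delta> * norm (y - x)) = 1 / exp (\<delta> * norm (y - x))"
      by (simp add: exp_minus inverse_eq_divide)
    ultimately show ?thesis
      using False Z unfolding g_def w_def rho2V_def Z_def[symmetric]
      by (simp add: field_simps power2_eq_square power3_eq_cube)
  qed (simp add: g_def w_def)
  have "ennreal ((f x - mu2V V f)\<^sup>2) = ennreal ((integral\<^sup>L lborel g)\<^sup>2)"
    unfolding g_def using mu2V_deviation[OF assms(1-4) F] by simp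
  also have "\<dots> \<le> (\<integral>\<^sup>+ y. ennreal ((g y)\<^sup>2 / w y) \<partial>lborel) * (\<integral>\<^sup>+ y. ennreal (w y) \<partial>lborel)"
    using Z by (intro weighted_cauchy_schwarz) (auto simp: g_def w_def rho2V_def)
  finally show ?thesis
    unfolding quotient by (simp add: w_def)
qed

lemma weight_integral_bound:
  fixes V :: "'a::euclidean_space \<Rightarrow> real" and \<delta> p Z Bd :: real and x :: 'a
  assumes [measurable]: "V \<in> borel_measurable borel"
    and int: "integrable lborel (\<lambda>x. exp (- V x))"
    and \<delta>: "0 \<le> \<delta>" and p: "0 \<le> p" and Z: "0 < Z"
    and Bd: "\<And>y. exp (- V y) ^ 2 * (1 + norm y) powr p * exp (\<delta> * norm y) \<le> Bd"
  shows "(\<integral>\<^sup>+ y. ennreal (exp (- V y) ^ 3 * norm (y - x) powr p * exp (\<delta> * norm (y - x)) / Z\<^sup>2) \<partial>lborel)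
      * ennreal (exp (- \<delta> * norm x) / ((1 + norm x) powr p * Z))
    \<le> ennreal (Bd / Z ^ 3 * (\<integral>y. exp (- V y) \<partial>lborel))"
proof -
  define c where "c = exp (- \<delta> * norm x) / ((1 + norm x) powr p * Z)"
  have c: "0 \<le> c" unfolding c_def using Z by simp
  have Bd_nonneg: "0 \<le> Bd"
    by (rule order_trans[OF _ Bd[of 0]]) simp
  have pointwise: "exp (- V y) ^ 3 * norm (y - x) powr p * exp (\<delta> * norm (y - x)) / Z\<^sup>2 * c
      \<le> Bd / Z ^ 3 * exp (- V y)" for y
  proof -
    define ax ay where "ax = (1 + norm x) powr p * exp (\<delta> * norm x)"
      and "ay = (1 + norm y) powr p * exp (\<delta> * norm y)"
    have "1 + norm x \<noteq> 0"
      by (metis add_pos_nonneg norm_ge_zero zero_less_one less_irrefl)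
    then have ax: "0 < ax" unfolding ax_def by simp
    have c_eq: "c = 1 / (ax * Z)"
      unfolding c_def ax_def by (simp add: exp_minus field_simps)
    have "exp (- V y) ^ 3 * norm (y - x) powr p * exp (\<delta> * norm (y - x)) / Z\<^sup>2 * c
        = exp (- V y) ^ 3 / Z ^ 3 * (norm (y - x) powr p * exp (\<delta> * norm (y - x)) / ax)"
      using ax Z by (simp add: c_eq field_simps power2_eq_square power3_eq_cube)
    also have "\<dots> \<le> exp (- V y) ^ 3 / Z ^ 3 * ay"
      using norm_powr_exp_submult[OF p \<delta>, of y x] ax Z
      by (intro mult_left_mono) (simp_all add: ax_def ay_def divide_le_eq mult_ac)
    also have "\<dots> = exp (- V y) / Z ^ 3 * (exp (- V y) ^ 2 * ay)"
      by (simp add: power2_eq_square power3_eq_cube)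
    also have "\<dots> \<le> exp (- V y) / Z ^ 3 * Bd"
      using Bd[of y] Z by (intro mult_left_mono) (simp_all add: ay_def mult_ac)
    finally show ?thesis by (simp add: mult_ac)
  qed
  have "(\<integral>\<^sup>+ y. ennreal (exp (- V y) ^ 3 * norm (y - x) powr p * exp (\<delta> * norm (y - x)) / Z\<^sup>2) \<partial>lborel)
      * ennreal c
      = (\<integral>\<^sup>+ y. ennreal (exp (- V y) ^ 3 * norm (y - x) powr p * exp (\<delta> * norm (y - x)) / Z\<^sup>2 * c) \<partial>lborel)"
    unfolding ennreal_mult''[OF c] by (rule nn_integral_multc[symmetric]) measurable
  also have "\<dots> \<le> (\<integral>\<^sup>+ y. ennreal (Bd / Z ^ 3 * exp (- V y)) \<partial>lborel)"
    by (intro nn_integral_mono ennreal_leI pointwise)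
  also have "\<dots> = ennreal (Bd / Z ^ 3 * (\<integral>y. exp (- V y) \<partial>lborel))"
    using int Bd_nonneg Z by (subst nn_integral_eq_integral) auto
  finally show ?thesis unfolding c_def .
qed

lemma weighted_variance_bound:
  fixes V f :: "'a::euclidean_space \<Rightarrow> real" and \<delta> p Bd M F :: real
  assumes [measurable]: "V \<in> borel_measurable borel" "f \<in> borel_measurable borel"
    and M: "\<And>x. exp (- V x) \<le> M" and int: "integrable lborel (\<lambda>x. exp (- V x))"
    and F: "\<And>x. \<bar>f x\<bar> \<le> F"
    and \<delta>: "0 \<le> \<delta>" and p: "0 \<le> p"
    and Bd: "\<And>y. exp (- V y) ^ 2 * (1 + norm y) powr p * exp (\<delta> * norm y) \<le> Bd"
  defines "K \<equiv> Bd / (\<integral>y. exp (- 2 * V y) \<partial>lborel) ^ 3 * (\<integral>y. exp (- V y) \<partial>lborel)"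
  shows "(\<integral>\<^sup>+ x. ennreal ((f x - mu2V V f)\<^sup>2 * exp (V x - \<delta> * norm x)
              / (1 + norm x) powr p * rho2V V x) \<partial>lborel)
    \<le> ennreal K * (\<integral>\<^sup>+ x. (\<integral>\<^sup>+ y. ennreal ((f y - f x)\<^sup>2 / norm (y - x) powr p
              * exp (- \<delta> * norm (y - x)) * exp (- V y)) \<partial>lborel) * ennreal (exp (- V x)) \<partial>lborel)"
proof -
  define Z where "Z = (\<integral>y. exp (- 2 * V y) \<partial>lborel)"
  have Z: "0 < Z"
    unfolding Z_def using rho2V_density[OF _ M int] by simp
  define energy where "energy x = (\<integral>\<^sup>+ y. ennreal ((f y - f x)\<^sup>2 / norm (y - x) powr p
      * exp (- \<delta> * norm (y - x)) * exp (- V y)) \<partial>lborel)" for x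
  define weight where "weight x = (\<integral>\<^sup>+ y. ennreal (exp (- V y) ^ 3 * norm (y - x) powr p
      * exp (\<delta> * norm (y - x)) / Z\<^sup>2) \<partial>lborel)" for x
  define c where "c x = exp (- \<delta> * norm x) / ((1 + norm x) powr p * Z)" for x :: 'a
  have c: "0 \<le> c x" for x
    unfolding c_def using Z by simp
  have pointwise: "ennreal ((f x - mu2V V f)\<^sup>2 * exp (V x - \<delta> * norm x) / (1 + norm x) powr p * rho2V V x)
      \<le> ennreal K * (energy x * ennreal (exp (- V x)))" for x
  proof -
    have "(f x - mu2V V f)\<^sup>2 * exp (V x - \<delta> * norm x) / (1 + norm x) powr p * rho2V V x
        = (f x - mu2V V f)\<^sup>2 * exp (- V x) * c x"
      unfolding c_def rho2V_def Z_def[symmetric]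
      by (simp add: field_simps flip: exp_add)
    then have "ennreal ((f x - mu2V V f)\<^sup>2 * exp (V x - \<delta> * norm x) / (1 + norm x) powr p * rho2V V x)
        = ennreal ((f x - mu2V V f)\<^sup>2) * ennreal (exp (- V x)) * ennreal (c x)"
      using c by (simp add: ennreal_mult)
    also have "\<dots> \<le> (energy x * weight x) * ennreal (exp (- V x)) * ennreal (c x)"
      unfolding energy_def weight_def Z_def
      by (intro mult_right_mono deviation_le_energy_times_weight[OF assms(1-4) F]) auto
    also have "\<dots> = (energy x * ennreal (exp (- V x))) * (weight x * ennreal (c x))"
      by (simp add: mult_ac)
    also have "\<dots> \<le> (energy x * ennreal (exp (- V x))) * ennreal K"
      unfolding weight_def c_def K_def Z_def[symmetric]
      by (intro mult_left_mono weight_integral_bound[OF _ int \<delta> p Z Bd]) auto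
    finally show ?thesis
      by (simp add: mult_ac)
  qed
  have "(\<integral>\<^sup>+ x. ennreal ((f x - mu2V V f)\<^sup>2 * exp (V x - \<delta> * norm x)
              / (1 + norm x) powr p * rho2V V x) \<partial>lborel)
      \<le> (\<integral>\<^sup>+ x. ennreal K * (energy x * ennreal (exp (- V x))) \<partial>lborel)"
    by (intro nn_integral_mono pointwise)
  also have "\<dots> = ennreal K * (\<integral>\<^sup>+ x. energy x * ennreal (exp (- V x)) \<partial>lborel)"
    unfolding energy_def by (rule nn_integral_cmult) measurable
  finally show ?thesis
    unfolding energy_def .
qed

lemma Cb_inf_bounded_measurable:
  fixes f :: "'a::euclidean_space \<Rightarrow> real"
  assumes "Cb_inf f"
  obtains F where "\<And>x. \<bar>f x\<bar> \<le> F" and "f \<in> borel_measurable borel"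
proof -
  from assms have "bounded (range f)" and "\<forall>x. f differentiable (at x)"
    by (auto elim: Cb_inf.cases)
  then show ?thesis
    using that unfolding bounded_iff
    by (metis borel_measurable_continuous_onI continuous_at_imp_continuous_on
        differentiable_imp_continuous_within real_norm_def rangeI)
qed

text \<open>The tail condition, with q = p - \<alpha>0 for p = d + \<alpha>, gives the bound Bd required by the
  previous lemma, which then applies to every f in C_b^\<infinity>.\<close>

theorem corollary5p2:
  fixes V :: "'a::euclidean_space \<Rightarrow> real"
    and \<delta> \<alpha> \<alpha>0 :: real
  assumes V_meas: "V \<in> borel_measurable lborel"
    and V_locbdd: "locally_bounded V"
    and V_bdd: "bounded (range (\<lambda>x. exp (- V x)))"
    and V_int: "integrable lborel (\<lambda>x. exp (- V x))"
    and \<delta>_pos: "\<delta> > 0"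
    and \<alpha>_range: "0 < \<alpha>" "\<alpha> < 2"
    and \<alpha>0_range: "0 < \<alpha>0" "\<alpha>0 < 1"
    and tail: "Limsup at_infinity (\<lambda>x::'a. ereal ((SUP z\<in>{z. norm z \<ge> norm x}. exp (- V z))
                  * exp (\<delta> * norm x) * norm x powr (real DIM('a) + \<alpha> - \<alpha>0))) = 0"
  shows "\<exists>C0>0. \<forall>f. Cb_inf f \<longrightarrow>
    (\<integral>\<^sup>+ x. ennreal ((f x - mu2V V f)\<^sup>2 * exp (V x - \<delta> * norm x)
              / (1 + norm x) powr (real DIM('a) + \<alpha>) * rho2V V x) \<partial>lborel)
    \<le> ennreal C0 * (\<integral>\<^sup>+ x. (\<integral>\<^sup>+ y. ennreal ((f y - f x)\<^sup>2 / norm (y - x) powr (real DIM('a) + \<alpha>)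
              * exp (- \<delta> * norm (y - x)) * exp (- V y)) \<partial>lborel) * ennreal (exp (- V x)) \<partial>lborel)"
proof -
  define p where "p = real DIM('a) + \<alpha>"
  have p: "1 \<le> p"
    unfolding p_def using DIM_positive[where 'a='a] \<alpha>_range by linarith
  obtain M where M: "\<And>x. exp (- V x) \<le> M"
    using V_bdd unfolding bounded_iff by auto
  then have "bdd_above (range (\<lambda>z. exp (- V z)))"
    by (intro bdd_aboveI2)
  then obtain R where "\<And>y::'a. R \<le> norm y \<Longrightarrow> exp (- V y) * exp (\<delta> * norm y) * norm y powr (p - \<alpha>0) \<le> 1"
    using decay_from_tail_limsup[OF _ tail[folded p_def]] by blast
  then obtain Bd where Bd: "\<And>y. exp (- V y) ^ 2 * (1 + norm y) powr p * exp (\<delta> * norm y) \<le> Bd"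
    using squared_weight_bounded[of "\<lambda>z. exp (- V z)" M \<delta> p "p - \<alpha>0" R] M \<delta>_pos p \<alpha>0_range
    by auto
  define K where "K = Bd / (\<integral>y. exp (- 2 * V y) \<partial>lborel) ^ 3 * (\<integral>y. exp (- V y) \<partial>lborel)"
  have K_le: "ennreal K \<le> ennreal (max K 1)"
    by (rule ennreal_leI) simp
  text \<open>K itself may be zero, so C0 = max K 1 is used for the strictly positive constant.\<close>
  note bound = weighted_variance_bound[OF _ _ M V_int _ _ _ Bd, folded K_def, unfolded p_def]
  show ?thesis
    by (intro exI[of _ "max K 1"] conjI allI impI, simp, erule Cb_inf_bounded_measurable,
        rule order_trans[OF bound mult_right_mono[OF K_le]])
      (use V_meas \<delta>_pos p in \<open>auto simp: p_def\<close>)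
qed

end
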